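(* Under the standing assumptions of the context, with $p_1,\dots,p_n$ pairwise distinct, for each $i$ the performance function $\mathcal H(p_1,\dots,p_n)=\int_Q\min_{(a,b)\in C} f(\|q-p_a\|,\|q-p_b\|)\phi(q)\,dq$ is differentiable in $p_i$ and $$\frac{\partial \mathcal H}{\partial p_i}=\sum_{\mathcal T_{ij}\in\mathcal P_i}\int_{V_{\mathcal T_{ij}}}\frac{\partial}{\partial p_i} f(\|q-p_i\|,\|q-p_j\|)\,\phi(q)\,dq,$$ i.e. the contributions arising from the dependence of the cell boundaries on $p_i$ vanish.
   Context: $Q\subset\mathbb{R}^2$ is a compact convex polygon, $\phi:Q\to[0,\infty)$ is a $C^2$ density, and $f:[0,\infty)^2\to\mathbb{R}$ is $C^2$ with $\partial f/\partial x\ge0$, $\partial f/\partial y\ge0$, $f(x,y)=f(y,x)$. $C=\{(i,j):1\le i<j\le n\}$, $n\ge3$. For $i<j$, $\mathcal T_{ij}=\{p_i,p_j\}$ (written also $\mathcal T_{ji}$), with order-2 Voronoi cell $V_{\mathcal T_{ij}}=\{q\in Q:\|q-p_v\|\le\|q-p_w\|\ \forall v\in\{i,j\},\ w\notin\{i,j\}\}$. $\mathcal P_i$ is the set of all $\mathcal T_{ij}$, $j\ne i$, containing $p_i$. *)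

theory Defs
  imports "HOL-Analysis.Analysis"
begin

definition C2_on :: "'a::euclidean_space set \<Rightarrow> ('a \<Rightarrow> real) \<Rightarrow> bool" where
  "C2_on S g \<longleftrightarrow>
     (\<exists>(D1 :: 'a \<Rightarrow> 'a \<Rightarrow>\<^sub>L real) (D2 :: 'a \<Rightarrow> 'a \<Rightarrow>\<^sub>L ('a \<Rightarrow>\<^sub>L real)).
        (\<forall>x\<in>S. (g has_derivative blinfun_apply (D1 x)) (at x within S) \<and>
                 (D1 has_derivative blinfun_apply (D2 x)) (at x within S)) \<and>
        continuous_on S D2)"

definition pairs :: "nat \<Rightarrow> (nat \<times> nat) set" where
  "pairs n = {(i, j). 1 \<le> i \<and> i < j \<and> j \<le> n}"

definition cell2 :: "nat \<Rightarrow> (real^2) set \<Rightarrow> (nat \<Rightarrow> real^2) \<Rightarrow> nat \<Rightarrow> nat \<Rightarrow> (real^2) set" where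
  "cell2 n Q p i j = {q \<in> Q. \<forall>v\<in>{i, j}. \<forall>w\<in>{1..n} - {i, j}. norm (q - p v) \<le> norm (q - p w)}"

definition perf :: "nat \<Rightarrow> (real^2) set \<Rightarrow> (real \<Rightarrow> real \<Rightarrow> real) \<Rightarrow> (real^2 \<Rightarrow> real)
                    \<Rightarrow> (nat \<Rightarrow> real^2) \<Rightarrow> real" where
  "perf n Q f \<phi> p = integral Q (\<lambda>q.
      Min ((\<lambda>(a, b). f (norm (q - p a)) (norm (q - p b))) ` pairs n) * \<phi> q)"

end

theory Submission
  imports Defs
begin

text \<open>
  Call a point q degenerate if it is a site or equidistant from two sites; these points form a
  null set. At a non-degenerate q the pair of sites realising the minimum in the integrand does
  not change when p_i moves a little. Hence the integrand is differentiable in p_i: its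
  derivative is that of f(|q - p_i|, |q - p_j|) if q lies in the cell of {p_i, p_j}, and 0 if q
  lies in no cell containing p_i. Since the integrand is moreover Lipschitz in p_i uniformly in q,
  dominated convergence allows differentiation under the integral sign, so the motion of the
  cell boundaries contributes nothing.
\<close>

section \<open>Differentiation under the integral sign\<close>

lemma has_derivative_difference_quotient:
  fixes F :: "'a::real_normed_vector \<Rightarrow> real"
  assumes "(F has_derivative F') (at p)"
  shows "((\<lambda>t. (F (p + t *\<^sub>R h) - F p) / t) \<longlongrightarrow> F' h) (at 0)"
proof -
  have "((\<lambda>t. p + t *\<^sub>R h) has_derivative (\<lambda>t. t *\<^sub>R h)) (at 0)"
    by (auto intro!: derivative_eq_intros)
  from diff_chain_at[OF this, of F F'] assms
  have "((\<lambda>t. F (p + t *\<^sub>R h)) has_derivative (\<lambda>t. F' h * t)) (at 0)"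
    using has_derivative_bounded_linear[OF assms]
    by (simp add: o_def linear_simps mult.commute)
  then have "((\<lambda>t. F (p + t *\<^sub>R h)) has_field_derivative F' h) (at 0)"
    by (simp add: has_field_derivative_def)
  then show ?thesis by (simp add: has_field_derivative_iff)
qed

lemma has_derivative_le_Lipschitz:
  fixes F :: "'a::real_normed_vector \<Rightarrow> real"
  assumes der: "(F has_derivative F') (at p)" and "r > 0"
    and lip: "\<And>y. y \<in> ball p r \<Longrightarrow> \<bar>F y - F p\<bar> \<le> L * norm (y - p)"
  shows "\<bar>F' h\<bar> \<le> L * norm h"
proof (rule tendsto_upperbound)
  show "((\<lambda>t. \<bar>(F (p + t *\<^sub>R h) - F p) / t\<bar>) \<longlongrightarrow> \<bar>F' h\<bar>) (at_right 0)"
    using has_derivative_difference_quotient[OF der, of h]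
    by (intro tendsto_rabs) (simp add: filterlim_at_split)
  have "\<bar>(F (p + t *\<^sub>R h) - F p) / t\<bar> \<le> L * norm h" if "0 < t" "t < r / (norm h + 1)" for t
  proof -
    have "0 < norm h + 1"
      by (simp add: add_nonneg_pos)
    then have "t * (norm h + 1) < r"
      using that by (simp add: pos_less_divide_eq)
    moreover have "norm (t *\<^sub>R h) \<le> t * (norm h + 1)"
      using \<open>0 < t\<close> by (simp add: distrib_left)
    ultimately have "norm (t *\<^sub>R h) < r"
      by linarith
    then have "\<bar>F (p + t *\<^sub>R h) - F p\<bar> \<le> L * norm h * t"
      using lip[of "p + t *\<^sub>R h"] \<open>0 < t\<close> by (simp add: dist_norm mult.commute mult.left_commute)
    then show ?thesis
      using \<open>0 < t\<close> by (simp add: abs_divide pos_divide_le_eq)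
  qed
  then show "\<forall>\<^sub>F t in at_right 0. \<bar>(F (p + t *\<^sub>R h) - F p) / t\<bar> \<le> L * norm h"
    using \<open>r > 0\<close> unfolding eventually_at_right_field
    by (intro exI[of _ "r / (norm h + 1)"]) (simp add: add_nonneg_pos)
qed simp

lemma integrable_on_Diff_negligible:
  fixes f :: "'n::euclidean_space \<Rightarrow> 'a::banach"
  assumes "negligible N"
  shows "f integrable_on (S - N) \<longleftrightarrow> f integrable_on S"
  by (rule integrable_spike_set_eq) (auto intro: negligible_subset[OF assms])

lemma integral_Diff_negligible:
  fixes f :: "'n::euclidean_space \<Rightarrow> 'a::banach"
  assumes "negligible N"
  shows "integral (S - N) f = integral S f"
  by (rule integral_spike_set) (auto intro: negligible_subset[OF assms])

lemma integrable_continuous_compact: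
  fixes g :: "'a::euclidean_space \<Rightarrow> real"
  assumes "compact S" "continuous_on S g"
  shows "g integrable_on S"
proof -
  have "(\<lambda>x. indicator S x *\<^sub>R g x) integrable_on UNIV"
    by (rule integrable_on_lborel[OF borel_integrable_compact[OF assms]])
  moreover have "(\<lambda>x. indicator S x *\<^sub>R g x) = (\<lambda>x. if x \<in> S then g x else 0)"
    by (auto simp: indicator_def)
  ultimately show ?thesis
    using integrable_restrict_UNIV[of S g] by simp
qed

context
  fixes G :: "'a::euclidean_space \<Rightarrow> 'b::euclidean_space \<Rightarrow> real"
    and G' :: "'b \<Rightarrow> 'a \<Rightarrow> real" and S N :: "'b set" and x0 :: 'a and r K :: real
  assumes S: "S \<in> lmeasurable" and N: "negligible N" and r: "r > 0"
    and integrable: "\<And>x. x \<in> ball x0 r \<Longrightarrow> G x integrable_on S"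
    and Lipschitz: "\<And>x q. x \<in> ball x0 r \<Longrightarrow> q \<in> S \<Longrightarrow> \<bar>G x q - G x0 q\<bar> \<le> K * norm (x - x0)"
    and derivative: "\<And>q. q \<in> S - N \<Longrightarrow> ((\<lambda>x. G x q) has_derivative G' q) (at x0)"
begin

lemma abs_param_derivative_le: "q \<in> S - N \<Longrightarrow> \<bar>G' q h\<bar> \<le> K * norm h"
  by (rule has_derivative_le_Lipschitz[OF derivative r]) (use Lipschitz in auto)

lemma integrable_const_Diff: "(\<lambda>q. c :: real) integrable_on (S - N)"
  using integrable_on_Diff_negligible[OF N, of "\<lambda>q. c" S] integrable_on_const[OF S] by simp

lemma integrable_param_derivative: "(\<lambda>q. G' q h) integrable_on S"
proof -
  define c where "c = r / (norm h + 1)"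
  define t where "t k = c * inverse (Suc k)" for k
  have h1: "0 < norm h + 1"
    by (simp add: add_nonneg_pos)
  have t_pos: "0 < t k" for k
    using r h1 by (simp add: t_def c_def)
  have t_small: "norm (t k *\<^sub>R h) < r" for k
  proof -
    have "norm (t k *\<^sub>R h) < t k * (norm h + 1)"
      using t_pos[of k] by (simp add: distrib_left)
    also have "\<dots> = r * inverse (Suc k)"
      using h1 by (simp add: t_def c_def)
    also have "\<dots> \<le> r"
      using r by (intro mult_left_le) (auto simp: inverse_le_1_iff)
    finally show ?thesis .
  qed
  have "t \<longlonglongrightarrow> 0"
    unfolding t_def by (rule tendsto_mult_right_zero[OF LIMSEQ_inverse_real_of_nat])
  then have t_at: "filterlim t (at 0) sequentially"
    using t_pos by (simp add: filterlim_at less_imp_neq[symmetric])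
  define s where "s k q = (G (x0 + t k *\<^sub>R h) q - G x0 q) / t k" for k q
  have "(\<lambda>q. G' q h) integrable_on (S - N)"
  proof (rule dominated_convergence(1)[OF _ integrable_const_Diff])
    fix k
    have "x0 + t k *\<^sub>R h \<in> ball x0 r"
      using t_small by (simp add: dist_norm)
    then show "s k integrable_on (S - N)"
      unfolding s_def integrable_on_Diff_negligible[OF N]
      by (intro integrable_on_divide integrable_diff integrable) (use r in auto)
  next
    fix k q assume q: "q \<in> S - N"
    have "\<bar>G (x0 + t k *\<^sub>R h) q - G x0 q\<bar> \<le> K * norm h * t k"
      using Lipschitz[of "x0 + t k *\<^sub>R h" q] t_small[of k] q t_pos[of k] by (simp add: dist_norm ac_simps)
    then show "norm (s k q) \<le> K * norm h"
      using t_pos[of k] by (simp add: s_def abs_divide pos_divide_le_eq)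
  next
    fix q assume "q \<in> S - N"
    from filterlim_compose[OF has_derivative_difference_quotient[OF derivative[OF this]] t_at]
    show "(\<lambda>k. s k q) \<longlonglongrightarrow> G' q h"
      unfolding s_def .
  qed
  then show ?thesis
    by (simp add: integrable_on_Diff_negligible[OF N])
qed

lemma linear_integral_param_derivative: "linear (\<lambda>h. integral S (\<lambda>q. G' q h))"
proof
  have linear: "linear (G' q)" if "q \<in> S - N" for q
    using derivative[OF that] by (rule has_derivative_linear)
  show "integral S (\<lambda>q. G' q (h + k)) = integral S (\<lambda>q. G' q h) + integral S (\<lambda>q. G' q k)" for h k
    by (subst integral_add[symmetric])
      (auto intro!: integral_spike[OF N] integrable_param_derivative simp: linear_add[OF linear])
  show "integral S (\<lambda>q. G' q (c *\<^sub>R h)) = c *\<^sub>R integral S (\<lambda>q. G' q h)" for c h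
  proof -
    have "integral S (\<lambda>q. G' q (c *\<^sub>R h)) = integral S (\<lambda>q. c * G' q h)"
      by (rule integral_spike[OF N]) (simp add: linear_scale[OF linear])
    then show ?thesis
      by simp
  qed
qed

lemma integral_param_remainder_LIMSEQ:
  assumes X_ball: "\<And>k. X k \<in> ball 0 r - {0}" and "X \<longlonglongrightarrow> 0"
  shows "(\<lambda>k. integral S (\<lambda>q. (G (x0 + X k) q - G x0 q - G' q (X k)) / norm (X k))) \<longlonglongrightarrow> 0"
proof -
  define R where "R = (\<lambda>k q. (G (x0 + X k) q - G x0 q - G' q (X k)) / norm (X k))"
  have x_ball: "x0 + X k \<in> ball x0 r" for k
    using X_ball by (simp add: dist_norm)
  have "(\<lambda>k. integral (S - N) (R k)) \<longlonglongrightarrow> integral (S - N) (\<lambda>q. 0)"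
  proof (rule dominated_convergence(2)[OF _ integrable_const_Diff])
    show "R k integrable_on (S - N)" for k
      unfolding R_def integrable_on_Diff_negligible[OF N]
      by (intro integrable_on_divide integrable_diff integrable x_ball integrable_param_derivative)
        (use r in auto)
    show "norm (R k q) \<le> 2 * K" if "q \<in> S - N" for k q
    proof -
      have "\<bar>G (x0 + X k) q - G x0 q - G' q (X k)\<bar> \<le> 2 * K * norm (X k)"
        using Lipschitz[OF x_ball[of k], of q] abs_param_derivative_le[OF that, of "X k"] that by simp
      moreover have "X k \<noteq> 0"
        using X_ball by simp
      ultimately show ?thesis
        by (simp add: R_def abs_divide pos_divide_le_eq)
    qed
    show "(\<lambda>k. R k q) \<longlonglongrightarrow> 0" if "q \<in> S - N" for q
    proof -
      have "((\<lambda>h. norm (G (x0 + h) q - G x0 q - G' q h) / norm h) \<longlongrightarrow> 0) (at 0)"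
        using derivative[OF that] by (simp add: has_derivative_at)
      then have "(\<lambda>k. norm (R k q)) \<longlonglongrightarrow> 0"
        using X_ball \<open>X \<longlonglongrightarrow> 0\<close> unfolding tendsto_at_iff_sequentially o_def
        by (simp add: R_def abs_divide)
      then show ?thesis
        by (rule tendsto_norm_zero_cancel)
    qed
  qed
  then show ?thesis
    by (simp add: integral_Diff_negligible[OF N] R_def del: integral_divide)
qed

lemma has_derivative_integral_param:
  "((\<lambda>x. integral S (G x)) has_derivative (\<lambda>h. integral S (\<lambda>q. G' q h))) (at x0)"
proof -
  define T where "T h = integral S (\<lambda>q. G' q h)" for h
  have "((\<lambda>h. norm (integral S (G (x0 + h)) - integral S (G x0) - T h) / norm h) \<longlongrightarrow> 0)
      (at 0 within ball 0 r)"
    unfolding tendsto_at_iff_sequentially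
  proof (intro allI impI)
    fix X :: "nat \<Rightarrow> 'a" assume X_ball: "\<forall>k. X k \<in> ball 0 r - {0}" and "X \<longlonglongrightarrow> 0"
    have "x0 + X k \<in> ball x0 r" for k
      using X_ball by (simp add: dist_norm)
    then have "integral S (\<lambda>q. (G (x0 + X k) q - G x0 q - G' q (X k)) / norm (X k))
        = (integral S (G (x0 + X k)) - integral S (G x0) - T (X k)) / norm (X k)" for k
      using integrable[of "x0 + X k"] integrable[of x0] r
      by (simp add: T_def integral_diff integrable_diff integrable_param_derivative)
    with integral_param_remainder_LIMSEQ[of X] X_ball \<open>X \<longlonglongrightarrow> 0\<close>
    have "(\<lambda>k. (integral S (G (x0 + X k)) - integral S (G x0) - T (X k)) / norm (X k)) \<longlonglongrightarrow> 0"
      by simp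
    from tendsto_rabs_zero[OF this]
    show "((\<lambda>h. norm (integral S (G (x0 + h)) - integral S (G x0) - T h) / norm h) \<circ> X) \<longlonglongrightarrow> 0"
      by (simp add: o_def abs_divide)
  qed
  then have "((\<lambda>h. norm (integral S (G (x0 + h)) - integral S (G x0) - T h) / norm h) \<longlongrightarrow> 0) (at 0)"
    using r by (simp add: at_within_open[of 0 "ball 0 r", symmetric])
  moreover have "bounded_linear T"
    using linear_integral_param_derivative unfolding T_def[abs_def]
    by (simp add: linear_conv_bounded_linear)
  ultimately show ?thesis
    unfolding has_derivative_at T_def by simp
qed

end

section \<open>Functions of class C2\<close>

lemma C2_on_imp_differentiable_on: "C2_on S g \<Longrightarrow> g differentiable_on S"
  unfolding C2_on_def differentiable_on_def differentiable_def by blast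

lemma C2_on_imp_continuous_on: "C2_on S g \<Longrightarrow> continuous_on S g"
  by (rule differentiable_imp_continuous_on[OF C2_on_imp_differentiable_on])

lemma C2_on_imp_differentiable_at:
  assumes "C2_on S g" "x \<in> interior S"
  shows "g differentiable (at x)"
proof -
  have "g differentiable (at x within S)"
    using C2_on_imp_differentiable_on[OF assms(1)] assms(2) interior_subset
    unfolding differentiable_on_def by blast
  then show ?thesis
    by (simp add: at_within_interior[OF assms(2)])
qed

lemma C2_on_Lipschitz:
  fixes g :: "'a::euclidean_space \<Rightarrow> real"
  assumes "C2_on S g" "compact B" "convex B" "B \<subseteq> S"
  obtains K where "\<And>x y. x \<in> B \<Longrightarrow> y \<in> B \<Longrightarrow> \<bar>g x - g y\<bar> \<le> K * norm (x - y)"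
proof -
  obtain D1 :: "'a \<Rightarrow> 'a \<Rightarrow>\<^sub>L real" and D2 :: "'a \<Rightarrow> 'a \<Rightarrow>\<^sub>L ('a \<Rightarrow>\<^sub>L real)" where
    D: "\<forall>x\<in>S. (g has_derivative D1 x) (at x within S) \<and> (D1 has_derivative D2 x) (at x within S)"
    using assms(1) unfolding C2_on_def by blast
  have "continuous_on S D1"
    by (rule has_derivative_continuous_on) (use D in blast)
  then have "compact (D1 ` B)"
    using assms(2,4) by (meson compact_continuous_image continuous_on_subset)
  then obtain K where K: "\<forall>y\<in>D1 ` B. norm y \<le> K"
    using compact_imp_bounded bounded_iff by metis
  have "norm (g x - g y) \<le> K * norm (x - y)" if "x \<in> B" "y \<in> B" for x y
  proof (rule differentiable_bound[where f' = "\<lambda>z. blinfun_apply (D1 z)", OF assms(3) _ _ that])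
    show "(g has_derivative D1 z) (at z within B)" if "z \<in> B" for z
      using D assms(4) that by (meson has_derivative_subset subsetD)
    show "onorm (D1 z) \<le> K" if "z \<in> B" for z
      using K that by (simp add: norm_blinfun.rep_eq)
  qed
  then show ?thesis
    using that by auto
qed

lemma C2_on_quadrant_differentiable_first:
  fixes f :: "real \<Rightarrow> real \<Rightarrow> real"
  assumes "C2_on ({0..} \<times> {0..}) (\<lambda>z. f (fst z) (snd z))" "0 \<le> t" "0 \<le> y"
  shows "(\<lambda>t. f t y) differentiable (at t within {0..})"
proof -
  have "(t, y) \<in> {0..} \<times> {0..}"
    using assms(2,3) by simp
  then have "(\<lambda>z. f (fst z) (snd z)) differentiable (at (t, y) within {0..} \<times> {0..})"
    using C2_on_imp_differentiable_on[OF assms(1)] unfolding differentiable_on_def by blast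
  then have F: "(\<lambda>z. f (fst z) (snd z)) differentiable (at (t, y) within (\<lambda>s. (s, y)) ` {0..})"
    by (rule differentiable_subset) (use assms(3) in auto)
  have "((\<lambda>s. (s, y)) has_derivative (\<lambda>s. (s, 0))) (at t within {0..})"
    by (intro derivative_intros)
  then have "(\<lambda>s. (s, y)) differentiable (at t within {0..})"
    unfolding differentiable_def by blast
  from differentiable_chain_within[OF this, of "\<lambda>z. f (fst z) (snd z)"] F
  show ?thesis
    by (simp add: o_def)
qed

lemma mono_of_partial_derivative_nonneg:
  fixes f :: "real \<Rightarrow> real \<Rightarrow> real"
  assumes f_C2: "C2_on ({0..} \<times> {0..}) (\<lambda>z. f (fst z) (snd z))"
    and f_mono_x: "\<forall>x\<ge>0. \<forall>y\<ge>0. \<forall>d. ((\<lambda>t. f t y) has_real_derivative d) (at x within {0..}) \<longrightarrow> d \<ge> 0"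
    and "0 \<le> x" "x \<le> x'" "0 \<le> y"
  shows "f x y \<le> f x' y"
proof (rule DERIV_nonneg_imp_increasing_open[OF \<open>x \<le> x'\<close>])
  note partial = C2_on_quadrant_differentiable_first[OF f_C2 _ \<open>0 \<le> y\<close>]
  fix t assume "x < t" "t < x'"
  then have t: "t \<in> interior {0..}" "0 \<le> t"
    using \<open>0 \<le> x\<close> by simp_all
  then obtain d where d: "((\<lambda>t. f t y) has_real_derivative d) (at t within {0..})"
    using partial unfolding real_differentiable_def by blast
  then have "0 \<le> d"
    using f_mono_x t(2) \<open>0 \<le> y\<close> by blast
  with d show "\<exists>d. ((\<lambda>t. f t y) has_real_derivative d) (at t) \<and> 0 \<le> d"
    using at_within_interior[OF t(1)] by auto
next
  have "(\<lambda>t. f t y) differentiable_on {0..}"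
    using C2_on_quadrant_differentiable_first[OF f_C2 _ \<open>0 \<le> y\<close>]
    unfolding differentiable_on_def atLeast_iff by blast
  then have "continuous_on {0..} (\<lambda>t. f t y)"
    by (rule differentiable_imp_continuous_on)
  then show "continuous_on {x..x'} (\<lambda>t. f t y)"
    by (rule continuous_on_subset) (use \<open>0 \<le> x\<close> in auto)
qed

lemma mono_both_of_mono_first_sym:
  fixes f :: "real \<Rightarrow> real \<Rightarrow> real"
  assumes mono: "\<And>x x' y. 0 \<le> x \<Longrightarrow> x \<le> x' \<Longrightarrow> 0 \<le> y \<Longrightarrow> f x y \<le> f x' y"
    and sym: "\<And>x y. 0 \<le> x \<Longrightarrow> 0 \<le> y \<Longrightarrow> f x y = f y x"
    and "0 \<le> x" "x \<le> x'" "0 \<le> y" "y \<le> y'"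
  shows "f x y \<le> f x' y'"
proof -
  have "f x y \<le> f x' y"
    using assms by (intro mono) auto
  also have "\<dots> = f y x'"
    using assms by (intro sym) auto
  also have "\<dots> \<le> f y' x'"
    using assms by (intro mono) auto
  also have "\<dots> = f x' y'"
    using assms by (intro sym) auto
  finally show ?thesis .
qed

lemma C2_on_quadrant_Lipschitz:
  fixes f :: "real \<Rightarrow> real \<Rightarrow> real"
  assumes "C2_on ({0..} \<times> {0..}) (\<lambda>z. f (fst z) (snd z))"
  obtains K where "0 \<le> K"
    "\<And>a b a' b'. a \<in> {0..R} \<Longrightarrow> b \<in> {0..R} \<Longrightarrow> a' \<in> {0..R} \<Longrightarrow> b' \<in> {0..R} \<Longrightarrow>
      \<bar>f a b - f a' b'\<bar> \<le> K * (\<bar>a - a'\<bar> + \<bar>b - b'\<bar>)"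
proof -
  have "compact ({0..R} \<times> {0..R})" "convex ({0..R} \<times> {0..R})" "{0..R} \<times> {0..R} \<subseteq> {0..} \<times> {0..}"
    by (auto intro!: compact_Times convex_Times)
  then obtain K where K: "\<And>z z'. z \<in> {0..R} \<times> {0..R} \<Longrightarrow> z' \<in> {0..R} \<times> {0..R} \<Longrightarrow>
      \<bar>f (fst z) (snd z) - f (fst z') (snd z')\<bar> \<le> K * norm (z - z')"
    using C2_on_Lipschitz[OF assms] by metis
  show ?thesis
  proof (rule that)
    show "0 \<le> max K 0"
      by simp
    fix a b a' b' :: real
    assume "a \<in> {0..R}" "b \<in> {0..R}" "a' \<in> {0..R}" "b' \<in> {0..R}"
    then have "\<bar>f a b - f a' b'\<bar> \<le> K * norm (a - a', b - b')"
      using K[of "(a, b)" "(a', b')"] by simp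
    also have "\<dots> \<le> max K 0 * (\<bar>a - a'\<bar> + \<bar>b - b'\<bar>)"
      using norm_Pair_le[of "a - a'" "b - b'"] by (intro mult_mono) auto
    finally show "\<bar>f a b - f a' b'\<bar> \<le> max K 0 * (\<bar>a - a'\<bar> + \<bar>b - b'\<bar>)" .
  qed
qed

lemma C2_on_quadrant_differentiable_dist:
  fixes f :: "real \<Rightarrow> real \<Rightarrow> real" and q y :: "'a::real_inner"
  assumes "C2_on ({0..} \<times> {0..}) (\<lambda>z. f (fst z) (snd z))" "q \<noteq> y" "c > 0"
  shows "(\<lambda>x. f (norm (q - x)) c) differentiable (at y)"
proof -
  have "(\<lambda>x. norm (q - x)) differentiable (at y)"
    using differentiable_compose[of norm "\<lambda>x. q - x" y UNIV] assms(2) by simp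
  then have "(\<lambda>x. (norm (q - x), c)) differentiable (at y)"
    by (rule differentiable_Pair) simp
  moreover have "(\<lambda>z. f (fst z) (snd z)) differentiable (at (norm (q - y), c))"
    using assms by (intro C2_on_imp_differentiable_at[OF assms(1)]) (simp add: interior_Times)
  ultimately show ?thesis
    using differentiable_compose[of "\<lambda>z. f (fst z) (snd z)" "\<lambda>x. (norm (q - x), c)"] by simp
qed

section \<open>Minima over pairs of sites\<close>

lemma finite_pairs: "finite (pairs n)"
  by (rule finite_subset[of _ "{1..n} \<times> {1..n}"]) (auto simp: pairs_def)

lemma Min_pairs_eq:
  fixes f :: "real \<Rightarrow> real \<Rightarrow> real" and e :: "nat \<Rightarrow> real"
  assumes mono: "\<And>x x' y y'. 0 \<le> x \<Longrightarrow> x \<le> x' \<Longrightarrow> 0 \<le> y \<Longrightarrow> y \<le> y' \<Longrightarrow> f x y \<le> f x' y'"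
    and sym: "\<And>x y. 0 \<le> x \<Longrightarrow> 0 \<le> y \<Longrightarrow> f x y = f y x"
    and e_nonneg: "\<And>a. 0 \<le> e a"
    and uv: "u \<in> {1..n}" "v \<in> {1..n}" "u \<noteq> v"
    and nearest: "\<And>w. w \<in> {1..n} - {u, v} \<Longrightarrow> e u \<le> e w \<and> e v \<le> e w"
  shows "Min ((\<lambda>(a, b). f (e a) (e b)) ` pairs n) = f (e u) (e v)"
proof (rule Min_eqI)
  show "finite ((\<lambda>(a, b). f (e a) (e b)) ` pairs n)"
    using finite_pairs by simp
next
  fix y assume "y \<in> (\<lambda>(a, b). f (e a) (e b)) ` pairs n"
  then obtain a b where "(a, b) \<in> pairs n" and y: "y = f (e a) (e b)"
    by auto
  then have ab: "a \<in> {1..n}" "b \<in> {1..n}" "a \<noteq> b"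
    by (auto simp: pairs_def)
  have "(e u \<le> e a \<and> e v \<le> e b) \<or> (e v \<le> e a \<and> e u \<le> e b)"
    using nearest[of a] nearest[of b] ab by (cases "a \<in> {u, v}"; cases "b \<in> {u, v}") auto
  then show "f (e u) (e v) \<le> y"
  proof
    assume "e u \<le> e a \<and> e v \<le> e b"
    then show ?thesis
      unfolding y using e_nonneg by (intro mono) auto
  next
    assume "e v \<le> e a \<and> e u \<le> e b"
    then have "f (e v) (e u) \<le> f (e a) (e b)"
      using e_nonneg by (intro mono) auto
    then show ?thesis
      unfolding y using sym e_nonneg by simp
  qed
next
  have "(min u v, max u v) \<in> pairs n"
    using uv by (auto simp: pairs_def)
  moreover have "f (e (min u v)) (e (max u v)) = f (e u) (e v)"
    using sym e_nonneg by (cases "u \<le> v") (auto simp: min_def max_def)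
  ultimately show "f (e u) (e v) \<in> (\<lambda>(a, b). f (e a) (e b)) ` pairs n"
    by force
qed

lemma abs_Min_image_diff_le:
  fixes F G :: "'a \<Rightarrow> real"
  assumes "finite I" "I \<noteq> {}" "\<And>k. k \<in> I \<Longrightarrow> \<bar>F k - G k\<bar> \<le> c"
  shows "\<bar>Min (F ` I) - Min (G ` I)\<bar> \<le> c"
proof -
  have "Min (F ` I) \<in> F ` I" "Min (G ` I) \<in> G ` I"
    using assms(1,2) by simp_all
  then obtain k1 k2 where k1: "k1 \<in> I" "Min (F ` I) = F k1" and k2: "k2 \<in> I" "Min (G ` I) = G k2"
    by blast
  have "Min (F ` I) \<le> F k2" "Min (G ` I) \<le> G k1"
    using assms(1) k1(1) k2(1) by auto
  then show ?thesis
    using assms(3)[OF k1(1)] assms(3)[OF k2(1)] unfolding k1(2) k2(2) abs_le_iff by linarith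
qed

lemma continuous_on_Min_image:
  fixes F :: "'k \<Rightarrow> 'a::topological_space \<Rightarrow> real"
  assumes "finite I" "I \<noteq> {}" "\<And>k. k \<in> I \<Longrightarrow> continuous_on S (F k)"
  shows "continuous_on S (\<lambda>x. Min ((\<lambda>k. F k x) ` I))"
  using assms
proof (induction I rule: finite_ne_induct)
  case (insert a I)
  then show ?case
    by (simp add: Min_insert continuous_on_min)
qed simp

definition pair_min :: "nat \<Rightarrow> (real \<Rightarrow> real \<Rightarrow> real) \<Rightarrow> (nat \<Rightarrow> 'a::real_normed_vector) \<Rightarrow> 'a \<Rightarrow> real" where
  "pair_min n f p q = Min ((\<lambda>(a, b). f (norm (q - p a)) (norm (q - p b))) ` pairs n)"

lemma abs_pair_min_diff_le:
  assumes "0 \<le> K"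
    and K: "\<And>a b a' b'. a \<in> {0..R} \<Longrightarrow> b \<in> {0..R} \<Longrightarrow> a' \<in> {0..R} \<Longrightarrow> b' \<in> {0..R} \<Longrightarrow>
      \<bar>f a b - f a' b'\<bar> \<le> K * (\<bar>a - a'\<bar> + \<bar>b - b'\<bar>)"
    and range: "\<And>a. a \<in> {1..n} \<Longrightarrow> norm (q - p a) \<le> R \<and> norm (q - p' a) \<le> R"
    and close: "\<And>a. \<bar>norm (q - p a) - norm (q - p' a)\<bar> \<le> \<delta>"
  shows "\<bar>pair_min n f p q - pair_min n f p' q\<bar> \<le> 2 * K * \<delta>"
proof (cases "pairs n = {}")
  case True
  then show ?thesis
    using close[of 0] \<open>0 \<le> K\<close> by (simp add: pair_min_def)
next
  case False
  show ?thesis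
    unfolding pair_min_def
  proof (rule abs_Min_image_diff_le[OF finite_pairs False])
    fix k assume "k \<in> pairs n"
    then obtain a b where k: "k = (a, b)" "a \<in> {1..n}" "b \<in> {1..n}"
      by (auto simp: pairs_def)
    have "\<bar>f (norm (q - p a)) (norm (q - p b)) - f (norm (q - p' a)) (norm (q - p' b))\<bar>
        \<le> K * (\<bar>norm (q - p a) - norm (q - p' a)\<bar> + \<bar>norm (q - p b) - norm (q - p' b)\<bar>)"
      using k range by (intro K) auto
    also have "\<dots> \<le> K * (\<delta> + \<delta>)"
      using close[of a] close[of b] \<open>0 \<le> K\<close> by (intro mult_left_mono) auto
    also have "\<dots> = 2 * K * \<delta>"
      by simp
    finally show "\<bar>(case k of (a, b) \<Rightarrow> f (norm (q - p a)) (norm (q - p b)))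
        - (case k of (a, b) \<Rightarrow> f (norm (q - p' a)) (norm (q - p' b)))\<bar> \<le> 2 * K * \<delta>"
      using k by simp
  qed
qed

section \<open>Order-2 Voronoi cells\<close>

definition degenerate_points :: "nat \<Rightarrow> (nat \<Rightarrow> 'a::real_normed_vector) \<Rightarrow> 'a set" where
  "degenerate_points n p = p ` {1..n} \<union> {q. \<not> inj_on (\<lambda>a. norm (q - p a)) {1..n}}"

lemma bisector_eq_hyperplane:
  fixes a b :: "'a::real_inner"
  shows "{q. norm (q - a) = norm (q - b)} = {q. (2 *\<^sub>R (b - a)) \<bullet> q = b \<bullet> b - a \<bullet> a}"
  unfolding norm_eq by (auto simp: inner_diff_left inner_diff_right inner_commute algebra_simps)

lemma negligible_degenerate_points:
  fixes p :: "nat \<Rightarrow> 'a::euclidean_space"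
  assumes "inj_on p {1..n}"
  shows "negligible (degenerate_points n p)"
proof -
  have bisector: "negligible {q. norm (q - p a) = norm (q - p b)}"
    if "a \<in> {1..n}" "b \<in> {1..n}" "a \<noteq> b" for a b
  proof -
    have "p a \<noteq> p b"
      using inj_onD[OF assms _ that(1,2)] that(3) by blast
    then show ?thesis
      unfolding bisector_eq_hyperplane by (intro negligible_hyperplane) simp
  qed
  have "negligible (\<Union>a\<in>{1..n}. \<Union>b\<in>{1..n} - {a}. {q. norm (q - p a) = norm (q - p b)})"
    by (auto intro!: negligible_Union bisector)
  moreover have "{q. \<not> inj_on (\<lambda>a. norm (q - p a)) {1..n}} \<subseteq>
      (\<Union>a\<in>{1..n}. \<Union>b\<in>{1..n} - {a}. {q. norm (q - p a) = norm (q - p b)})"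
    unfolding inj_on_def by blast
  ultimately have "negligible {q. \<not> inj_on (\<lambda>a. norm (q - p a)) {1..n}}"
    by (rule negligible_subset)
  then show ?thesis
    unfolding degenerate_points_def by (intro negligible_Un[OF negligible_finite]) auto
qed

lemma cell2_commute: "cell2 n Q p i j = cell2 n Q p j i"
  unfolding cell2_def by (simp add: insert_commute)

lemma exists_cell2:
  assumes "2 \<le> n" "q \<in> Q"
  obtains u v where "u \<in> {1..n}" "v \<in> {1..n}" "u \<noteq> v" "q \<in> cell2 n Q p u v"
proof -
  define d where "d a = norm (q - p a)" for a
  obtain u where u: "is_arg_min d (\<lambda>a. a \<in> {1..n}) u"
    using ex_is_arg_min_if_finite[of "{1..n}" d] assms(1) by auto
  have "(if u = 1 then 2 else 1) \<in> {1..n} - {u}"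
    using assms(1) by auto
  then have "{1..n} - {u} \<noteq> {}"
    by blast
  then obtain v where v: "is_arg_min d (\<lambda>a. a \<in> {1..n} - {u}) v"
    using ex_is_arg_min_if_finite[of "{1..n} - {u}" d] by auto
  have "d u \<le> d w" if "w \<in> {1..n}" for w
    using u that unfolding is_arg_min_def by (meson not_le)
  moreover have "d v \<le> d w" if "w \<in> {1..n} - {u}" for w
    using v that unfolding is_arg_min_def by (meson not_le)
  ultimately have "q \<in> cell2 n Q p u v"
    using assms(2) unfolding cell2_def d_def by auto
  moreover have "u \<in> {1..n}" "v \<in> {1..n}" "u \<noteq> v"
    using u v unfolding is_arg_min_def by auto
  ultimately show ?thesis
    using that by blast
qed

lemma inj_on_dist_if_not_degenerate:
  "q \<notin> degenerate_points n p \<Longrightarrow> inj_on (\<lambda>a. norm (q - p a)) {1..n}"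
  by (simp add: degenerate_points_def)

lemma cell2_unique:
  assumes "q \<notin> degenerate_points n p" "q \<in> cell2 n Q p i j" "q \<in> cell2 n Q p i k"
    and "j \<in> {1..n} - {i}" "k \<in> {1..n} - {i}"
  shows "j = k"
proof (rule ccontr)
  assume "j \<noteq> k"
  then have "norm (q - p j) \<le> norm (q - p k)" "norm (q - p k) \<le> norm (q - p j)"
    using assms(2-5) unfolding cell2_def by blast+
  then show False
    using inj_onD[OF inj_on_dist_if_not_degenerate[OF assms(1)]] assms(4,5) \<open>j \<noteq> k\<close> by force
qed

lemma eventually_cell2_fun_upd:
  assumes "q \<notin> degenerate_points n p" "q \<in> cell2 n Q p u v" "u \<in> {1..n}" "v \<in> {1..n}"
  shows "\<forall>\<^sub>F x in at (p i). q \<in> cell2 n Q (p(i := x)) u v"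
proof -
  have tendsto: "((\<lambda>x. norm (q - (p(i := x)) a)) \<longlongrightarrow> norm (q - p a)) (at (p i))" for a
    by (cases "a = i") (simp_all add: tendsto_intros)
  \<comment> \<open>Off the degenerate points the inequalities defining the cell are strict, so they survive
    small moves of p i.\<close>
  have "norm (q - p c) < norm (q - p w)" if "c \<in> {u, v}" "w \<in> {1..n} - {u, v}" for c w
  proof -
    have "norm (q - p c) \<le> norm (q - p w)"
      using assms(2) that unfolding cell2_def by blast
    moreover have "c \<noteq> w" "c \<in> {1..n}"
      using that assms(3,4) by auto
    ultimately show ?thesis
      using inj_onD[OF inj_on_dist_if_not_degenerate[OF assms(1)]] that by force
  qed
  then have "\<forall>\<^sub>F x in at (p i). norm (q - (p(i := x)) c) < norm (q - (p(i := x)) w)"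
    if "c \<in> {u, v}" "w \<in> {1..n} - {u, v}" for c w
    using order_tendstoD(1)[OF tendsto_diff[OF tendsto tendsto], of 0 w c] that by simp
  then have "\<forall>\<^sub>F x in at (p i). \<forall>c\<in>{u, v}. \<forall>w\<in>{1..n} - {u, v}.
      norm (q - (p(i := x)) c) < norm (q - (p(i := x)) w)"
    by (intro eventually_ball_finite ballI) auto
  then show ?thesis
    by eventually_elim (use assms(2) in \<open>auto simp: cell2_def less_imp_le\<close>)
qed

lemma cell2_subset: "cell2 n Q p i j \<subseteq> Q"
  by (auto simp: cell2_def)

lemma compact_cell2:
  assumes "compact Q"
  shows "compact (cell2 n Q p i j)"
proof -
  have "cell2 n Q p i j = Q \<inter> (\<Inter>v\<in>{i, j}. \<Inter>w\<in>{1..n} - {i, j}. {q. norm (q - p v) \<le> norm (q - p w)})"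
    unfolding cell2_def by blast
  moreover have "closed (\<Inter>v\<in>{i, j}. \<Inter>w\<in>{1..n} - {i, j}. {q. norm (q - p v) \<le> norm (q - p w)})"
    by (intro closed_INT ballI closed_Collect_le continuous_intros)
  ultimately show ?thesis
    using compact_Int_closed[OF assms] by simp
qed

section \<open>Differentiability of the performance function\<close>

text \<open>The cells of the pairs containing p_i overlap only in degenerate points, so this sum has at
  most one nonzero term off a null set.\<close>
definition cell_derivative ::
    "nat \<Rightarrow> (real^2) set \<Rightarrow> (real \<Rightarrow> real \<Rightarrow> real) \<Rightarrow> (nat \<Rightarrow> real^2) \<Rightarrow> nat \<Rightarrow> real^2 \<Rightarrow> real^2 \<Rightarrow> real"
  where "cell_derivative n Q f p i q h = (\<Sum>j\<in>{1..n} - {i}.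
    if q \<in> cell2 n Q p i j then frechet_derivative (\<lambda>x. f (norm (q - x)) (norm (q - p j))) (at (p i)) h else 0)"

context
  fixes f :: "real \<Rightarrow> real \<Rightarrow> real"
  assumes f_C2: "C2_on ({0..} \<times> {0..}) (\<lambda>z. f (fst z) (snd z))"
    and f_mono: "\<And>x x' y y'. 0 \<le> x \<Longrightarrow> x \<le> x' \<Longrightarrow> 0 \<le> y \<Longrightarrow> y \<le> y' \<Longrightarrow> f x y \<le> f x' y'"
    and f_sym: "\<And>x y. 0 \<le> x \<Longrightarrow> 0 \<le> y \<Longrightarrow> f x y = f y x"
begin

lemma pair_min_cell2:
  assumes "u \<in> {1..n}" "v \<in> {1..n}" "u \<noteq> v" "q \<in> cell2 n Q p u v"
  shows "pair_min n f p q = f (norm (q - p u)) (norm (q - p v))"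
  unfolding pair_min_def
  by (rule Min_pairs_eq[where e = "\<lambda>a. norm (q - p a)", OF f_mono f_sym])
    (use assms in \<open>auto simp: cell2_def\<close>)

lemma eventually_pair_min_fun_upd:
  assumes "q \<notin> degenerate_points n p" "q \<in> cell2 n Q p u v" "u \<in> {1..n}" "v \<in> {1..n}" "u \<noteq> v"
  shows "\<forall>\<^sub>F x in at (p i).
    f (norm (q - (p(i := x)) u)) (norm (q - (p(i := x)) v)) = pair_min n f (p(i := x)) q"
  using eventually_cell2_fun_upd[OF assms(1-4)]
  by eventually_elim (rule pair_min_cell2[OF assms(3-5), symmetric])

lemma has_derivative_pair_min_in_cell:
  assumes "q \<notin> degenerate_points n p" "q \<in> cell2 n Q p i j" "i \<in> {1..n}" "j \<in> {1..n} - {i}"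
  shows "((\<lambda>x. pair_min n f (p(i := x)) q) has_derivative
      frechet_derivative (\<lambda>x. f (norm (q - x)) (norm (q - p j))) (at (p i))) (at (p i))"
proof (rule has_derivative_transform_eventually)
  have j: "j \<in> {1..n}" "i \<noteq> j"
    using assms(4) by auto
  have "q \<noteq> p i" "q \<noteq> p j"
    using assms(1,3,4) by (auto simp: degenerate_points_def)
  then show "((\<lambda>x. f (norm (q - x)) (norm (q - p j))) has_derivative
      frechet_derivative (\<lambda>x. f (norm (q - x)) (norm (q - p j))) (at (p i))) (at (p i))"
    by (simp add: C2_on_quadrant_differentiable_dist[OF f_C2] frechet_derivative_works[symmetric])
  show "\<forall>\<^sub>F x in at (p i). f (norm (q - x)) (norm (q - p j)) = pair_min n f (p(i := x)) q"
    using eventually_pair_min_fun_upd[OF assms(1,2,3) j, of i] j by simp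
  show "f (norm (q - p i)) (norm (q - p j)) = pair_min n f (p(i := p i)) q"
    using pair_min_cell2[OF assms(3) j assms(2)] by simp
qed simp

lemma has_derivative_pair_min_outside_cells:
  assumes "2 \<le> n" "q \<in> Q" "q \<notin> degenerate_points n p" "i \<in> {1..n}"
    and outside: "\<And>j. j \<in> {1..n} - {i} \<Longrightarrow> q \<notin> cell2 n Q p i j"
  shows "((\<lambda>x. pair_min n f (p(i := x)) q) has_derivative (\<lambda>h. 0)) (at (p i))"
proof -
  obtain u v where uv: "u \<in> {1..n}" "v \<in> {1..n}" "u \<noteq> v" and cell: "q \<in> cell2 n Q p u v"
    using exists_cell2[OF assms(1,2)] by blast
  have "u \<noteq> i" "v \<noteq> i"
    using outside[of u] outside[of v] cell uv by (auto simp: cell2_commute)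
  then have "\<forall>\<^sub>F x in at (p i). pair_min n f p q = pair_min n f (p(i := x)) q"
    using eventually_pair_min_fun_upd[OF assms(3) cell uv, of i] by (simp add: pair_min_cell2[OF uv cell])
  then show ?thesis
    by (rule has_derivative_transform_eventually[OF has_derivative_const]) simp_all
qed

lemma continuous_on_pair_min: "continuous_on S (pair_min n f p)"
proof (cases "pairs n = {}")
  case False
  have cont: "continuous_on S (\<lambda>q. (\<lambda>z. f (fst z) (snd z)) (norm (q - p a), norm (q - p b)))" for a b
    by (rule continuous_on_compose2[OF C2_on_imp_continuous_on[OF f_C2]])
      (auto intro!: continuous_intros)
  show ?thesis
    unfolding pair_min_def
  proof (rule continuous_on_Min_image[OF finite_pairs False])
    fix k :: "nat \<times> nat"
    show "continuous_on S (\<lambda>q. case k of (a, b) \<Rightarrow> f (norm (q - p a)) (norm (q - p b)))"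
      using cont by (cases k) simp
  qed
qed (simp add: pair_min_def)

lemma pair_min_fun_upd_Lipschitz:
  fixes p :: "nat \<Rightarrow> 'a::real_normed_vector"
  assumes "bounded Q" "bounded B"
  obtains K where "\<And>q x y. q \<in> Q \<Longrightarrow> x \<in> B \<Longrightarrow> y \<in> B \<Longrightarrow>
    \<bar>pair_min n f (p(i := x)) q - pair_min n f (p(i := y)) q\<bar> \<le> K * norm (x - y)"
proof -
  have "bounded (Q \<union> B \<union> p ` {1..n})"
    using assms by (simp add: finite_imp_bounded)
  then obtain R where R: "\<And>z. z \<in> Q \<union> B \<union> p ` {1..n} \<Longrightarrow> norm z \<le> R"
    unfolding bounded_iff by blast
  obtain K where "0 \<le> K" and K: "\<And>a b a' b'. a \<in> {0..2 * R} \<Longrightarrow> b \<in> {0..2 * R} \<Longrightarrow>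
      a' \<in> {0..2 * R} \<Longrightarrow> b' \<in> {0..2 * R} \<Longrightarrow> \<bar>f a b - f a' b'\<bar> \<le> K * (\<bar>a - a'\<bar> + \<bar>b - b'\<bar>)"
    using C2_on_quadrant_Lipschitz[OF f_C2] by metis
  show ?thesis
  proof (rule that)
    fix q x y assume q: "q \<in> Q" and x: "x \<in> B" and y: "y \<in> B"
    have range: "norm (q - (p(i := z)) a) \<le> 2 * R" if "z \<in> B" "a \<in> {1..n}" for z a
      using norm_triangle_ineq4[of q "(p(i := z)) a"] R[of q] R[of z] R[of "p a"] q that by auto
    show "\<bar>pair_min n f (p(i := x)) q - pair_min n f (p(i := y)) q\<bar> \<le> 2 * K * norm (x - y)"
    proof (rule abs_pair_min_diff_le[OF \<open>0 \<le> K\<close> K])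
      show "norm (q - (p(i := x)) a) \<le> 2 * R \<and> norm (q - (p(i := y)) a) \<le> 2 * R" if "a \<in> {1..n}" for a
        using range[OF x that] range[OF y that] by blast
      show "\<bar>norm (q - (p(i := x)) a) - norm (q - (p(i := y)) a)\<bar> \<le> norm (x - y)" for a
        using norm_triangle_ineq3[of "q - x" "q - y"] by (cases "a = i") (simp_all add: norm_minus_commute)
    qed
  qed
qed

lemma has_derivative_pair_min:
  assumes "2 \<le> n" "q \<in> Q" "q \<notin> degenerate_points n p" "i \<in> {1..n}"
  shows "((\<lambda>x. pair_min n f (p(i := x)) q) has_derivative cell_derivative n Q f p i q) (at (p i))"
proof (cases "\<exists>j\<in>{1..n} - {i}. q \<in> cell2 n Q p i j")
  case True
  then obtain j where j: "j \<in> {1..n} - {i}" "q \<in> cell2 n Q p i j"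
    by blast
  have "cell_derivative n Q f p i q h = frechet_derivative (\<lambda>x. f (norm (q - x)) (norm (q - p j))) (at (p i)) h"
    for h
  proof -
    have "(if q \<in> cell2 n Q p i k then frechet_derivative (\<lambda>x. f (norm (q - x)) (norm (q - p k))) (at (p i)) h else 0)
        = (if k = j then frechet_derivative (\<lambda>x. f (norm (q - x)) (norm (q - p j))) (at (p i)) h else 0)"
      if "k \<in> {1..n} - {i}" for k
    proof (cases "k = j")
      case False
      then have "q \<notin> cell2 n Q p i k"
        using cell2_unique[OF assms(3) j(2) _ j(1) that] by blast
      with False show ?thesis
        by simp
    qed (simp add: j(2))
    then have "cell_derivative n Q f p i q h = (\<Sum>k\<in>{1..n} - {i}.
        if k = j then frechet_derivative (\<lambda>x. f (norm (q - x)) (norm (q - p j))) (at (p i)) h else 0)"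
      unfolding cell_derivative_def by (rule sum.cong[OF refl])
    also have "\<dots> = frechet_derivative (\<lambda>x. f (norm (q - x)) (norm (q - p j))) (at (p i)) h"
      using j(1) by simp
    finally show ?thesis .
  qed
  then have "cell_derivative n Q f p i q = frechet_derivative (\<lambda>x. f (norm (q - x)) (norm (q - p j))) (at (p i))"
    by (rule ext)
  then show ?thesis
    using has_derivative_pair_min_in_cell[OF assms(3) j(2) assms(4) j(1)] by simp
next
  case False
  then have "cell_derivative n Q f p i q = (\<lambda>h. 0)"
    by (auto simp: cell_derivative_def fun_eq_iff intro: sum.neutral)
  with False show ?thesis
    using has_derivative_pair_min_outside_cells[OF assms] by simp
qed

context
  fixes n :: nat and Q :: "(real^2) set" and \<phi> :: "real^2 \<Rightarrow> real" and p :: "nat \<Rightarrow> real^2" and i :: nat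
  assumes n2: "2 \<le> n" and compact_Q: "compact Q" and phi_cont: "continuous_on Q \<phi>"
    and distinct: "inj_on p {1..n}" and i: "i \<in> {1..n}"
begin

lemma integrable_weighted_pair_min:
  assumes "compact S" "S \<subseteq> Q"
  shows "(\<lambda>q. pair_min n f (p(i := x)) q * \<phi> q) integrable_on S"
  using assms
  by (intro integrable_continuous_compact continuous_on_mult continuous_on_pair_min
      continuous_on_subset[OF phi_cont])

lemma weighted_pair_min_Lipschitz:
  obtains K where "\<And>x q. x \<in> ball (p i) 1 \<Longrightarrow> q \<in> Q \<Longrightarrow>
    \<bar>pair_min n f (p(i := x)) q * \<phi> q - pair_min n f (p(i := p i)) q * \<phi> q\<bar> \<le> K * norm (x - p i)"
proof -
  obtain K where K: "\<And>q x y. q \<in> Q \<Longrightarrow> x \<in> ball (p i) 1 \<Longrightarrow> y \<in> ball (p i) 1 \<Longrightarrow>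
      \<bar>pair_min n f (p(i := x)) q - pair_min n f (p(i := y)) q\<bar> \<le> K * norm (x - y)"
    using pair_min_fun_upd_Lipschitz[OF compact_imp_bounded[OF compact_Q] bounded_ball] by metis
  obtain \<Phi> where \<Phi>: "\<And>q. q \<in> Q \<Longrightarrow> norm (\<phi> q) \<le> \<Phi>"
    using compact_imp_bounded[OF compact_continuous_image[OF phi_cont compact_Q]]
    unfolding bounded_iff by blast
  show ?thesis
  proof (rule that)
    fix x q assume x: "x \<in> ball (p i) 1" and q: "q \<in> Q"
    have "\<bar>pair_min n f (p(i := x)) q * \<phi> q - pair_min n f (p(i := p i)) q * \<phi> q\<bar>
        = \<bar>pair_min n f (p(i := x)) q - pair_min n f (p(i := p i)) q\<bar> * \<bar>\<phi> q\<bar>"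
      by (simp add: abs_mult[symmetric] left_diff_distrib)
    also have "\<dots> \<le> K * norm (x - p i) * \<Phi>"
      using K[OF q x, of "p i"] \<Phi>[OF q] by (intro mult_mono) auto
    finally show "\<bar>pair_min n f (p(i := x)) q * \<phi> q - pair_min n f (p(i := p i)) q * \<phi> q\<bar>
        \<le> K * \<Phi> * norm (x - p i)"
      by (simp add: ac_simps)
  qed
qed

lemma has_derivative_perf:
  "((\<lambda>x. perf n Q f \<phi> (p(i := x))) has_derivative
    (\<lambda>h. integral Q (\<lambda>q. cell_derivative n Q f p i q h * \<phi> q))) (at (p i))"
proof -
  obtain K where K: "\<And>x q. x \<in> ball (p i) 1 \<Longrightarrow> q \<in> Q \<Longrightarrow>
      \<bar>pair_min n f (p(i := x)) q * \<phi> q - pair_min n f (p(i := p i)) q * \<phi> q\<bar> \<le> K * norm (x - p i)"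
    using weighted_pair_min_Lipschitz by blast
  have "((\<lambda>x. integral Q (\<lambda>q. pair_min n f (p(i := x)) q * \<phi> q)) has_derivative
      (\<lambda>h. integral Q (\<lambda>q. cell_derivative n Q f p i q h * \<phi> q))) (at (p i))"
  proof (rule has_derivative_integral_param[OF lmeasurable_compact[OF compact_Q]
        negligible_degenerate_points[OF distinct] zero_less_one _ K])
    show "(\<lambda>q. pair_min n f (p(i := x)) q * \<phi> q) integrable_on Q" for x
      using compact_Q by (rule integrable_weighted_pair_min) simp
    show "((\<lambda>x. pair_min n f (p(i := x)) q * \<phi> q) has_derivative (\<lambda>h. cell_derivative n Q f p i q h * \<phi> q))
        (at (p i))" if "q \<in> Q - degenerate_points n p" for q
      using that by (intro has_derivative_mult_left has_derivative_pair_min n2 i) auto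
  qed
  then show ?thesis
    by (simp add: perf_def pair_min_def)
qed

lemma integrable_on_cell2:
  assumes "j \<in> {1..n} - {i}"
  shows "(\<lambda>q. frechet_derivative (\<lambda>x. f (norm (q - x)) (norm (q - p j))) (at (p i)) h * \<phi> q)
    integrable_on cell2 n Q p i j"
proof -
  obtain K where K: "\<And>x q. x \<in> ball (p i) 1 \<Longrightarrow> q \<in> Q \<Longrightarrow>
      \<bar>pair_min n f (p(i := x)) q * \<phi> q - pair_min n f (p(i := p i)) q * \<phi> q\<bar> \<le> K * norm (x - p i)"
    using weighted_pair_min_Lipschitz by blast
  show ?thesis
  proof (rule integrable_param_derivative[OF lmeasurable_compact[OF compact_cell2[OF compact_Q]]
        negligible_degenerate_points[OF distinct] zero_less_one])
    show "(\<lambda>q. pair_min n f (p(i := x)) q * \<phi> q) integrable_on cell2 n Q p i j" for x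
      by (intro integrable_weighted_pair_min compact_cell2 compact_Q cell2_subset)
    show "\<bar>pair_min n f (p(i := x)) q * \<phi> q - pair_min n f (p(i := p i)) q * \<phi> q\<bar> \<le> K * norm (x - p i)"
      if "x \<in> ball (p i) 1" "q \<in> cell2 n Q p i j" for x q
      using K that cell2_subset by blast
    show "((\<lambda>x. pair_min n f (p(i := x)) q * \<phi> q) has_derivative
        (\<lambda>h. frechet_derivative (\<lambda>x. f (norm (q - x)) (norm (q - p j))) (at (p i)) h * \<phi> q)) (at (p i))"
      if "q \<in> cell2 n Q p i j - degenerate_points n p" for q
      using that assms i by (intro has_derivative_mult_left has_derivative_pair_min_in_cell) auto
  qed
qed

lemma integral_cell_derivative:
  "integral Q (\<lambda>q. cell_derivative n Q f p i q h * \<phi> q) = (\<Sum>j\<in>{1..n} - {i}.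
    integral (cell2 n Q p i j) (\<lambda>q. frechet_derivative (\<lambda>x. f (norm (q - x)) (norm (q - p j))) (at (p i)) h * \<phi> q))"
proof -
  define F where "F = (\<lambda>j q. frechet_derivative (\<lambda>x. f (norm (q - x)) (norm (q - p j))) (at (p i)) h * \<phi> q)"
  have "cell_derivative n Q f p i q h * \<phi> q = (\<Sum>j\<in>{1..n} - {i}. if q \<in> cell2 n Q p i j then F j q else 0)" for q
    unfolding cell_derivative_def F_def sum_distrib_right by (rule sum.cong) simp_all
  moreover have "(\<lambda>q. if q \<in> cell2 n Q p i j then F j q else 0) integrable_on Q" if "j \<in> {1..n} - {i}" for j
    using integrable_on_cell2[OF that] cell2_subset[of n Q p i j]
    by (simp add: integrable_restrict_Int F_def Int_absorb2)
  ultimately have "integral Q (\<lambda>q. cell_derivative n Q f p i q h * \<phi> q)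
      = (\<Sum>j\<in>{1..n} - {i}. integral Q (\<lambda>q. if q \<in> cell2 n Q p i j then F j q else 0))"
    by (simp only:) (rule integral_sum; simp)
  also have "\<dots> = (\<Sum>j\<in>{1..n} - {i}. integral (cell2 n Q p i j) (F j))"
    using cell2_subset by (simp add: integral_restrict_Int Int_absorb2)
  finally show ?thesis
    by (simp add: F_def)
qed

end

end

theorem mainTheorem3:
  fixes Q :: "(real^2) set" and \<phi> :: "real^2 \<Rightarrow> real"
    and f :: "real \<Rightarrow> real \<Rightarrow> real" and p :: "nat \<Rightarrow> real^2" and n i :: nat
  assumes Q_polygon: "polytope Q" "interior Q \<noteq> {}"
    and phi_nonneg: "\<forall>q\<in>Q. \<phi> q \<ge> 0"
    and phi_C2: "C2_on Q \<phi>"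
    and f_C2: "C2_on ({0..} \<times> {0..}) (\<lambda>z. f (fst z) (snd z))"
    and f_mono_x: "\<forall>x\<ge>0. \<forall>y\<ge>0. \<forall>d. ((\<lambda>t. f t y) has_real_derivative d) (at x within {0..}) \<longrightarrow> d \<ge> 0"
    and f_mono_y: "\<forall>x\<ge>0. \<forall>y\<ge>0. \<forall>d. ((\<lambda>t. f x t) has_real_derivative d) (at y within {0..}) \<longrightarrow> d \<ge> 0"
    and f_sym: "\<forall>x\<ge>0. \<forall>y\<ge>0. f x y = f y x"
    and n3: "n \<ge> 3"
    and distinct: "inj_on p {1..n}"
    and i: "i \<in> {1..n}"
  shows "((\<lambda>x. perf n Q f \<phi> (p(i := x))) has_derivative
           (\<lambda>h. \<Sum>j\<in>{1..n} - {i}.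
                  integral (cell2 n Q p i j)
                    (\<lambda>q. frechet_derivative (\<lambda>x. f (norm (q - x)) (norm (q - p j))) (at (p i)) h
                         * \<phi> q)))
         (at (p i))"
proof -
  \<comment> \<open>Monotonicity in the second argument follows from symmetry.\<close>
  have sym: "\<And>x y. 0 \<le> x \<Longrightarrow> 0 \<le> y \<Longrightarrow> f x y = f y x"
    using f_sym by blast
  have mono: "\<And>x x' y y'. 0 \<le> x \<Longrightarrow> x \<le> x' \<Longrightarrow> 0 \<le> y \<Longrightarrow> y \<le> y' \<Longrightarrow> f x y \<le> f x' y'"
    by (rule mono_both_of_mono_first_sym[OF mono_of_partial_derivative_nonneg[OF f_C2 f_mono_x] sym])
  have "2 \<le> n" "compact Q" "continuous_on Q \<phi>"
    using n3 polytope_imp_compact[OF Q_polygon(1)] C2_on_imp_continuous_on[OF phi_C2] by simp_all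
  note setting = f_C2 mono sym this distinct i
  show ?thesis
    using has_derivative_perf[OF setting] by (simp only: integral_cell_derivative[OF setting])
qed

end
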